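(* Let $\bm{X},\bm{Y}\in\mathbb{R}^{n\times r}$ with $\bm{X}\bm{Y}^\top$ of rank $r$, and let $\bm{U}\bm{\Sigma}\bm{V}^\top$ be the compact SVD of $\bm{X}\bm{Y}^\top$. Then there exists an invertible $\bm{Q}\in\mathbb{R}^{r\times r}$ with $\bm{X}=\bm{U}\bm{\Sigma}^{1/2}\bm{Q}$ and $\bm{Y}=\bm{V}\bm{\Sigma}^{1/2}\bm{Q}^{-\top}$; moreover, if $\bm{U}_{\bm{Q}}\bm{\Sigma}_{\bm{Q}}\bm{V}_{\bm{Q}}^\top$ is the SVD of $\bm{Q}$, then $\|\bm{\Sigma}_{\bm{Q}}-\bm{\Sigma}_{\bm{Q}}^{-1}\|_{\mathrm{F}}\le\frac{1}{\sigma_{\min}(\bm{\Sigma})}\|\bm{X}^\top\bm{X}-\bm{Y}^\top\bm{Y}\|_{\mathrm{F}}$. In particular, if $\bm{X}^\top\bm{X}=\bm{Y}^\top\bm{Y}$ then $\bm{Q}$ is an orthogonal matrix.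
   Context: $\sigma_{\min}(\bm{\Sigma})$ denotes the smallest diagonal entry of $\bm{\Sigma}$. *)

theory Defs
  imports "HOL-Analysis.Analysis"
begin

definition diag_mat :: "real^'r \<Rightarrow> real^'r^'r" where
  "diag_mat d = (\<chi> i j. if i = j then d $ i else 0)"

definition frob_norm :: "real^'c^'m \<Rightarrow> real" where
  "frob_norm A = sqrt (\<Sum>i\<in>UNIV. \<Sum>j\<in>UNIV. (A $ i $ j)\<^sup>2)"

definition is_compact_svd :: "real^'m^'m \<Rightarrow> real^'r^'m \<Rightarrow> real^'r \<Rightarrow> real^'r^'m \<Rightarrow> bool" where
  "is_compact_svd M U s V \<longleftrightarrow>
     transpose U ** U = mat 1 \<and> transpose V ** V = mat 1 \<and>
     (\<forall>i. s $ i > 0) \<and> M = U ** diag_mat s ** transpose V"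

definition is_svd :: "real^'r^'r \<Rightarrow> real^'r^'r \<Rightarrow> real^'r \<Rightarrow> real^'r^'r \<Rightarrow> bool" where
  "is_svd Q U s V \<longleftrightarrow>
     orthogonal_matrix U \<and> orthogonal_matrix V \<and>
     (\<forall>i. s $ i \<ge> 0) \<and> Q = U ** diag_mat s ** transpose V"

end

theory Submission
  imports Defs
begin

text \<open>Write S for the diagonal matrix of singular values. Since U and V have orthonormal
  columns and S is invertible, X = U A and Y = V B with A = U^T X invertible and A B^T = S; the
  balancing matrix is Q = S^(-1/2) A, so that X^T X - Y^T Y = Q^T S Q - Q^-1 S Q^-T.
  For an SVD Q = U_Q D V_Q^T, conjugating this difference by V_Q gives D T D - D^-1 T D^-1 with
  T = U_Q^T S U_Q. Its i-th diagonal entry is (d_i - 1/d_i) (d_i + 1/d_i) T_ii, where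
  d_i + 1/d_i \<ge> 1 and T_ii \<ge> min S; the bound follows because the Frobenius norm dominates the
  diagonal and is invariant under orthogonal conjugation.
  If X^T X = Y^T Y, then P = Q Q^T satisfies P S P = S, so S^(1/2) P S^(1/2) is a positive
  semidefinite square root of S^2. Such roots are unique, hence it equals S and Q Q^T = 1.\<close>

lemma diag_mat_mult: "diag_mat a ** diag_mat b = diag_mat (\<chi> i. a$i * b$i)"
  by (simp add: diag_mat_def matrix_matrix_mult_def vec_eq_iff mult_delta_left mult_delta_right cong: if_cong)

lemma diag_mat_mult_inverse:
  "(\<And>i. d$i \<noteq> 0) \<Longrightarrow> diag_mat d ** diag_mat (\<chi> i. inverse (d$i)) = mat 1"
  unfolding diag_mat_mult by (simp add: diag_mat_def mat_def vec_eq_iff)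

lemma transpose_diag_mat [simp]: "transpose (diag_mat d) = diag_mat d"
  by (simp add: diag_mat_def transpose_def vec_eq_iff)

lemma diag_mat_diff: "diag_mat a - diag_mat b = diag_mat (a - b)"
  by (simp add: diag_mat_def vec_eq_iff)

lemma diag_mat_mult_vector: "diag_mat d *v x = (\<chi> i. d$i * x$i)"
  by (simp add: diag_mat_def matrix_vector_mult_def vec_eq_iff mult_delta_left mult_delta_right cong: if_cong)

lemma diag_mat_sandwich_nth: "(diag_mat a ** M ** diag_mat b) $ i $ j = a$i * M$i$j * b$j"
  by (simp add: diag_mat_def matrix_matrix_mult_def mult_delta_left mult_delta_right cong: if_cong)

lemma diag_mat_sqrt_square:
  "(\<And>i. s $ i \<ge> 0) \<Longrightarrow> diag_mat (\<chi> i. sqrt (s $ i)) ** diag_mat (\<chi> i. sqrt (s $ i)) = diag_mat s"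
  by (simp add: diag_mat_mult)

lemma invertible_diag_mat_sqrt:
  assumes "\<And>i. s $ i > 0"
  shows "invertible (diag_mat (\<chi> i. sqrt (s $ i)))"
proof -
  have "diag_mat (\<chi> i. sqrt (s $ i)) ** diag_mat (\<chi> i. inverse (sqrt (s $ i))) = mat 1"
    using diag_mat_mult_inverse[of "\<chi> i. sqrt (s $ i)"] assms by (simp add: less_imp_neq[symmetric])
  then show ?thesis unfolding invertible_right_inverse by blast
qed

lemma inner_diag_mat_pos:
  assumes "\<And>i. s $ i > 0" and "x \<noteq> 0"
  shows "x \<bullet> (diag_mat s *v x) > 0"
proof -
  obtain j where "x $ j \<noteq> 0" using assms(2) by (auto simp: vec_eq_iff)
  have "x \<bullet> (diag_mat s *v x) = (\<Sum>i\<in>UNIV. s $ i * (x $ i)\<^sup>2)"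
    by (simp add: diag_mat_mult_vector inner_vec_def power2_eq_square mult_ac)
  also have "\<dots> > 0"
    using assms(1) \<open>x $ j \<noteq> 0\<close> by (intro sum_pos2[of _ j]) (auto simp: zero_less_mult_iff less_imp_le)
  finally show ?thesis .
qed

lemma matrix_add_rdistrib: "(A + B) ** C = A ** C + B ** (C :: 'a::semiring_1^'p^'n)"
  by (simp add: matrix_matrix_mult_def vec_eq_iff sum.distrib distrib_right)

lemma matrix_diff_ldistrib: "A ** (B - C) = A ** B - A ** (C :: 'a::ring_1^'p^'n)"
  by (simp add: matrix_matrix_mult_def vec_eq_iff sum_subtractf right_diff_distrib)

lemma matrix_diff_rdistrib: "(A - B) ** C = A ** C - B ** (C :: 'a::ring_1^'p^'n)"
  by (simp add: matrix_matrix_mult_def vec_eq_iff sum_subtractf left_diff_distrib)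

lemma matrix_inv_cancel:
  assumes "invertible (A :: 'a::semiring_1^'n^'m)"
  shows "A ** matrix_inv A = mat 1" "matrix_inv A ** A = mat 1"
  using someI_ex[OF assms[unfolded invertible_def]] by (simp_all add: matrix_inv_def)

lemma matrix_inv_unique:
  fixes A B :: "'a::field^'n^'n"
  assumes "A ** B = mat 1"
  shows "matrix_inv A = B"
proof -
  have "invertible A" using assms invertible_right_inverse by blast
  then have "matrix_inv A = matrix_inv A ** (A ** B)" by (simp add: assms)
  also have "\<dots> = B" by (simp add: matrix_mul_assoc matrix_inv_cancel \<open>invertible A\<close>)
  finally show ?thesis .
qed

lemma inner_gram_matrix: "x \<bullet> ((transpose A ** A) *v x) = (A *v x) \<bullet> (A *v (x :: real^'n))"
  by (metis dot_lmul_matrix inner_commute matrix_vector_mul_assoc transpose_matrix_vector)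

lemma trace_symmetric_sandwich:
  fixes D M :: "real^'n^'n"
  assumes "transpose D = D"
  shows "trace (D ** M ** D) = (\<Sum>i\<in>UNIV. column i D \<bullet> (M *v column i D))"
proof -
  have "D $ j $ i = D $ i $ j" for i j
    using assms by (metis transpose_def vec_lambda_beta)
  then show ?thesis
    unfolding trace_def inner_vec_def matrix_vector_mult_def matrix_matrix_mult_def column_def
    by (simp add: sum_distrib_left sum_distrib_right mult_ac, subst sum.swap, simp add: mult_ac)
qed

lemma frob_norm_eq_norm: "frob_norm A = norm A"
  by (simp add: frob_norm_def norm_vec_def L2_set_def sum_nonneg)

lemma norm_transpose: "norm (transpose A) = norm (A :: real^'n^'m)"
  unfolding norm_vec_def L2_set_def transpose_def by (simp add: sum_nonneg, subst sum.swap, simp)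

lemma norm_diag_mat: "norm (diag_mat d) = norm d"
proof -
  have "((diag_mat d)$i$j)\<^sup>2 = (if i = j then (d$i)\<^sup>2 else 0)" for i j
    by (simp add: diag_mat_def)
  then show ?thesis
    unfolding norm_vec_def L2_set_def by (simp add: sum_nonneg)
qed

lemma norm_diagonal_le: "norm (\<chi> i. A$i$i) \<le> norm (A :: real^'n^'n)"
  unfolding norm_vec_def L2_set_def by (auto intro!: sum_mono member_le_sum simp: sum_nonneg)

lemma norm_orthogonal_matrix_mult_right:
  assumes "orthogonal_matrix R"
  shows "norm (A ** R) = norm (A :: real^'n^'m)"
proof -
  have "(A ** R) $ i = transpose R *v A $ i" for i
    by (simp add: matrix_matrix_mult_def vector_matrix_mult_def vec_eq_iff)
  moreover have "orthogonal_transformation ((*v) (transpose R))"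
    using assms by (simp add: orthogonal_transformation_matrix)
  ultimately show ?thesis
    by (simp add: norm_vec_def orthogonal_transformation)
qed

lemma norm_orthogonal_matrix_mult_left:
  assumes "orthogonal_matrix R"
  shows "norm (R ** A) = norm (A :: real^'n^'m)"
  by (metis assms matrix_transpose_mul norm_orthogonal_matrix_mult_right
      norm_transpose orthogonal_matrix_transpose)

section \<open>Singular values\<close>

lemma svd_singular_values_pos:
  assumes "invertible Q" and "is_svd Q UQ sQ VQ"
  shows "sQ $ i > 0"
proof -
  from assms(2) have oU: "orthogonal_matrix UQ" and oV: "orthogonal_matrix VQ"
    and nonneg: "sQ $ i \<ge> 0" and Q: "Q = UQ ** diag_mat sQ ** transpose VQ"
    unfolding is_svd_def by auto
  have "det Q = det UQ * (\<Prod>j\<in>UNIV. sQ $ j) * det VQ"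
    by (simp add: Q det_mul det_transpose det_diagonal diag_mat_def)
  moreover have "det Q \<noteq> 0" using assms(1) invertible_det_nz by blast
  ultimately have "sQ $ i \<noteq> 0" by auto
  with nonneg show ?thesis by simp
qed

lemma svd_matrix_inv:
  assumes "is_svd Q UQ sQ VQ" and "\<And>i. sQ $ i \<noteq> 0"
  shows "matrix_inv Q = VQ ** diag_mat (\<chi> i. inverse (sQ $ i)) ** transpose UQ"
proof (rule matrix_inv_unique)
  from assms(1) have "UQ ** transpose UQ = mat 1" "transpose VQ ** VQ = mat 1"
    and "Q = UQ ** diag_mat sQ ** transpose VQ"
    unfolding is_svd_def orthogonal_matrix_def by auto
  then show "Q ** (VQ ** diag_mat (\<chi> i. inverse (sQ $ i)) ** transpose UQ) = mat 1"
    by (simp add: matrix_mul_assoc[symmetric]) (simp add: matrix_mul_assoc diag_mat_mult_inverse assms(2))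
qed

lemma Min_le_orthogonal_congruence_diag_mat:
  fixes U :: "real^'n^'n"
  assumes "orthogonal_matrix U"
  shows "Min (range (\<lambda>i. s $ i)) \<le> (transpose U ** diag_mat s ** U) $ i $ i"
proof -
  let ?m = "Min (range (\<lambda>i. s $ i))"
  have "(\<Sum>k\<in>UNIV. (U $ k $ i)\<^sup>2) = (transpose U ** U) $ i $ i"
    by (simp add: matrix_matrix_mult_def transpose_def power2_eq_square)
  also have "\<dots> = 1" using assms by (simp add: orthogonal_matrix mat_def)
  finally have unit: "(\<Sum>k\<in>UNIV. (U $ k $ i)\<^sup>2) = 1" .
  have "?m = (\<Sum>k\<in>UNIV. (U $ k $ i)\<^sup>2 * ?m)"
    by (simp add: sum_distrib_right[symmetric] unit)
  also have "\<dots> \<le> (\<Sum>k\<in>UNIV. (U $ k $ i)\<^sup>2 * s $ k)"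
    by (intro sum_mono mult_left_mono) auto
  also have "\<dots> = (transpose U ** diag_mat s ** U) $ i $ i"
    by (simp add: matrix_matrix_mult_def transpose_def diag_mat_def power2_eq_square
        mult_delta_left mult_delta_right mult_ac cong: if_cong)
  finally show ?thesis .
qed

lemma abs_diff_inverse_le:
  fixes d m t :: real
  assumes "0 < d" and "0 \<le> m" and "m \<le> t"
  shows "m * \<bar>d - inverse d\<bar> \<le> \<bar>d * t * d - inverse d * t * inverse d\<bar>"
proof -
  have "0 < inverse d" using assms(1) by simp
  then have "1 \<le> d + inverse d"
    using assms(1) one_le_inverse[of d] by (cases "d \<le> 1") linarith+
  then have "\<bar>d - inverse d\<bar> \<le> \<bar>d - inverse d\<bar> * (d + inverse d)"
    by (simp add: mult_le_cancel_left1)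
  then have "m * \<bar>d - inverse d\<bar> \<le> t * (\<bar>d - inverse d\<bar> * (d + inverse d))"
    using assms by (intro mult_mono) auto
  also have "\<dots> = \<bar>(d - inverse d) * (d + inverse d) * t\<bar>"
    using assms \<open>1 \<le> d + inverse d\<close> by (simp add: abs_mult)
  also have "\<dots> = \<bar>d * t * d - inverse d * t * inverse d\<bar>"
    by (simp add: algebra_simps)
  finally show ?thesis .
qed

lemma svd_singular_value_deviation_le:
  fixes Q UQ VQ :: "real^'r^'r"
  assumes "invertible Q" and s_pos: "\<And>i. s $ i > 0" and svd: "is_svd Q UQ sQ VQ"
  shows "frob_norm (diag_mat sQ - diag_mat (\<chi> i. inverse (sQ $ i)))
    \<le> (1 / Min (range (\<lambda>i. s $ i))) *
       frob_norm (transpose Q ** diag_mat s ** Q - matrix_inv Q ** diag_mat s ** transpose (matrix_inv Q))"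
proof -
  from svd have oU: "orthogonal_matrix UQ" and oV: "orthogonal_matrix VQ"
    and Q: "Q = UQ ** diag_mat sQ ** transpose VQ"
    unfolding is_svd_def by auto
  have sQ_pos: "sQ $ i > 0" for i by (rule svd_singular_values_pos[OF assms(1) svd])
  define D where "D = diag_mat sQ"
  define D' where "D' = diag_mat (\<chi> i. inverse (sQ $ i))"
  define T where "T = transpose UQ ** diag_mat s ** UQ"
  define G where "G = transpose Q ** diag_mat s ** Q - matrix_inv Q ** diag_mat s ** transpose (matrix_inv Q)"
  define m where "m = Min (range (\<lambda>i. s $ i))"
  have m_pos: "m > 0"
    using s_pos unfolding m_def by (subst Min_gr_iff) auto
  have VtV: "transpose VQ ** VQ = mat 1" using oV by (simp add: orthogonal_matrix)
  have QV: "Q ** VQ = UQ ** D"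
    by (simp add: Q D_def matrix_mul_assoc[symmetric] VtV)
  have Qinv_V: "transpose (matrix_inv Q) ** VQ = UQ ** D'"
    using svd_matrix_inv[OF svd] sQ_pos
    by (simp add: D'_def matrix_transpose_mul matrix_mul_assoc[symmetric] VtV less_imp_neq[symmetric])
  have GV: "transpose VQ ** G ** VQ = D ** T ** D - D' ** T ** D'"
  proof -
    have "transpose VQ ** G ** VQ
        = transpose (Q ** VQ) ** diag_mat s ** (Q ** VQ)
          - transpose (transpose (matrix_inv Q) ** VQ) ** diag_mat s ** (transpose (matrix_inv Q) ** VQ)"
      by (simp add: G_def matrix_diff_ldistrib matrix_diff_rdistrib matrix_transpose_mul matrix_mul_assoc)
    then show ?thesis
      by (simp add: QV Qinv_V T_def D_def D'_def matrix_transpose_mul matrix_mul_assoc)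
  qed
  have m_le_T: "m \<le> T $ i $ i" for i
    unfolding m_def T_def by (rule Min_le_orthogonal_congruence_diag_mat[OF oU])
  have "m * \<bar>sQ $ i - inverse (sQ $ i)\<bar> \<le> \<bar>(transpose VQ ** G ** VQ) $ i $ i\<bar>" for i
    using abs_diff_inverse_le[OF sQ_pos less_imp_le[OF m_pos] m_le_T]
    by (simp add: GV D_def D'_def diag_mat_sandwich_nth)
  then have "norm (m *\<^sub>R (sQ - (\<chi> i. inverse (sQ $ i)))) \<le> norm (\<chi> i. (transpose VQ ** G ** VQ) $ i $ i)"
    by (intro norm_le_componentwise_cart) (simp add: abs_mult m_pos[THEN less_imp_le])
  also have "\<dots> \<le> norm (transpose VQ ** G ** VQ)"
    by (rule norm_diagonal_le)
  also have "\<dots> = norm G"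
    using oV by (simp add: norm_orthogonal_matrix_mult_left norm_orthogonal_matrix_mult_right)
  finally have "m * norm (sQ - (\<chi> i. inverse (sQ $ i))) \<le> norm G"
    using m_pos by simp
  then show ?thesis
    using m_pos by (simp add: frob_norm_eq_norm diag_mat_diff norm_diag_mat G_def m_def field_simps)
qed

section \<open>Positive semidefinite square roots\<close>

lemma psd_eq_if_square_eq:
  fixes W S :: "real^'n^'n"
  assumes W_sym: "transpose W = W" and S_sym: "transpose S = S"
    and W_psd: "\<And>x. x \<bullet> (W *v x) \<ge> 0" and S_pd: "\<And>x. x \<noteq> 0 \<Longrightarrow> x \<bullet> (S *v x) > 0"
    and sq: "W ** W = S ** S"
  shows "W = S"
proof -
  define D where "D = W - S"
  have D_sym: "transpose D = D"
    using W_sym S_sym by (simp add: D_def transpose_def vec_eq_iff)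
  have "trace (D ** (W + S) ** D) = trace (D ** W ** D) + trace (D ** (S ** D))"
    by (simp add: matrix_add_ldistrib matrix_add_rdistrib trace_add matrix_mul_assoc)
  also have "trace (D ** (S ** D)) = trace (D ** (D ** S))"
    by (metis matrix_mul_assoc trace_mul_sym)
  also have "trace (D ** W ** D) + trace (D ** (D ** S)) = trace (D ** (W ** D + D ** S))"
    by (simp add: matrix_add_ldistrib trace_add matrix_mul_assoc)
  also have "W ** D + D ** S = 0"
    by (simp add: D_def matrix_diff_ldistrib matrix_diff_rdistrib sq)
  finally have "trace (D ** (W + S) ** D) = 0"
    by (simp add: trace_def)
  then have "(\<Sum>i\<in>UNIV. column i D \<bullet> (W *v column i D) + column i D \<bullet> (S *v column i D)) = 0"
    by (simp add: trace_symmetric_sandwich[OF D_sym] matrix_vector_mult_add_rdistrib inner_add_right)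
  moreover have S_psd: "x \<bullet> (S *v x) \<ge> 0" for x
    using S_pd[of x] by (cases "x = 0") auto
  ultimately have "column i D \<bullet> (W *v column i D) + column i D \<bullet> (S *v column i D) = 0" for i
    using W_psd by (subst (asm) sum_nonneg_eq_0_iff) (auto intro: add_nonneg_nonneg less_imp_le)
  then have "column i D = 0" for i
    using W_psd S_pd by (metis add_nonneg_pos not_less_iff_gr_or_eq)
  then have "D = 0"
    by (simp add: vec_eq_iff column_def)
  then show ?thesis by (simp add: D_def)
qed

lemma orthogonal_matrix_if_balanced_gram:
  fixes Q :: "real^'r^'r"
  assumes "invertible Q" and s_pos: "\<And>i. s $ i > 0"
    and balanced: "transpose Q ** diag_mat s ** Q = matrix_inv Q ** diag_mat s ** transpose (matrix_inv Q)"
  shows "orthogonal_matrix Q"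
proof -
  define S where "S = diag_mat s"
  define H where "H = diag_mat (\<chi> i. sqrt (s $ i))"
  define P where "P = Q ** transpose Q"
  define W where "W = H ** P ** H"
  have HH: "H ** H = S"
    using s_pos by (simp add: H_def S_def diag_mat_sqrt_square less_imp_le)
  have "invertible H" unfolding H_def using s_pos by (rule invertible_diag_mat_sqrt)
  have Q_Qinv: "Q ** matrix_inv Q = mat 1" by (rule matrix_inv_cancel(1)[OF assms(1)])
  then have Qinv_Q: "transpose (matrix_inv Q) ** transpose Q = mat 1"
    by (metis matrix_transpose_mul transpose_mat)
  have "P ** S ** P = Q ** (transpose Q ** S ** Q) ** transpose Q"
    by (simp add: P_def matrix_mul_assoc)
  also have "\<dots> = (Q ** matrix_inv Q) ** S ** (transpose (matrix_inv Q) ** transpose Q)"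
    by (simp add: balanced S_def matrix_mul_assoc)
  finally have PSP: "P ** S ** P = S" by (simp add: Q_Qinv Qinv_Q)
  have W_gram: "W = transpose (transpose Q ** H) ** (transpose Q ** H)"
    by (simp add: W_def P_def H_def matrix_transpose_mul matrix_mul_assoc)
  have "W ** W = H ** (P ** (H ** H) ** P) ** H"
    by (simp add: W_def matrix_mul_assoc)
  also have "\<dots> = (H ** H) ** (H ** H)"
    by (simp add: HH PSP) (simp add: HH[symmetric] matrix_mul_assoc)
  finally have WW: "W ** W = S ** S" by (simp only: HH)
  have W_sym: "transpose W = W"
    by (simp add: W_gram matrix_transpose_mul)
  have W_psd: "x \<bullet> (W *v x) \<ge> 0" for x
    unfolding W_gram inner_gram_matrix by simp
  have S_sym: "transpose S = S" by (simp add: S_def)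
  have S_pd: "x \<noteq> 0 \<Longrightarrow> x \<bullet> (S *v x) > 0" for x
    unfolding S_def using s_pos by (rule inner_diag_mat_pos)
  have "W = S" by (rule psd_eq_if_square_eq[OF W_sym S_sym W_psd S_pd WW])
  have "P = matrix_inv H ** W ** matrix_inv H"
    by (simp add: W_def matrix_mul_assoc matrix_inv_cancel \<open>invertible H\<close>)
      (simp add: matrix_mul_assoc[symmetric] matrix_inv_cancel \<open>invertible H\<close>)
  also have "\<dots> = mat 1"
    by (simp add: \<open>W = S\<close> HH[symmetric] matrix_mul_assoc matrix_inv_cancel \<open>invertible H\<close>)
  finally show ?thesis
    by (simp add: P_def orthogonal_matrix_def matrix_left_right_inverse)
qed

section \<open>Balanced factorization\<close>

lemma factor_through_orthonormal_columns:
  fixes X U :: "real^'r^'n" and C :: "real^'r^'r"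
  assumes XC: "X ** C = U" and U: "transpose U ** U = mat 1"
  shows "X = U ** (transpose U ** X)" and "invertible (transpose U ** X)"
proof -
  have AC: "(transpose U ** X) ** C = mat 1"
    by (simp add: matrix_mul_assoc[symmetric] XC U)
  then show "invertible (transpose U ** X)"
    using invertible_right_inverse by blast
  from AC have "C ** (transpose U ** X) = mat 1"
    by (simp add: matrix_left_right_inverse)
  then have "X = X ** (C ** (transpose U ** X))" by simp
  also have "\<dots> = U ** (transpose U ** X)" by (simp add: matrix_mul_assoc XC)
  finally show "X = U ** (transpose U ** X)" .
qed

lemma compact_svd_factors:
  fixes X Y U V :: "real^'r^'n"
  assumes "is_compact_svd (X ** transpose Y) U s V"
  shows "X = U ** (transpose U ** X)" and "Y = V ** (transpose V ** Y)"
    and "invertible (transpose U ** X)"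
    and "(transpose U ** X) ** transpose (transpose V ** Y) = diag_mat s"
proof -
  from assms have U: "transpose U ** U = mat 1" and V: "transpose V ** V = mat 1"
    and s_pos: "\<And>i. s $ i > 0" and M: "X ** transpose Y = U ** diag_mat s ** transpose V"
    unfolding is_compact_svd_def by auto
  define S' where "S' = diag_mat (\<chi> i. inverse (s $ i))"
  have SS': "diag_mat s ** S' = mat 1"
    unfolding S'_def using s_pos by (simp add: diag_mat_mult_inverse less_imp_neq[symmetric])
  have "X ** (transpose Y ** V ** S') = (X ** transpose Y) ** V ** S'"
    by (simp add: matrix_mul_assoc)
  also have "\<dots> = U ** (diag_mat s ** (transpose V ** V) ** S')"
    by (simp add: M matrix_mul_assoc)
  finally have "X ** (transpose Y ** V ** S') = U" by (simp add: V SS')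
  from factor_through_orthonormal_columns[OF this U]
  show "X = U ** (transpose U ** X)" and "invertible (transpose U ** X)" .
  have MT: "Y ** transpose X = V ** diag_mat s ** transpose U"
    using arg_cong[OF M, of transpose] by (simp add: matrix_transpose_mul matrix_mul_assoc)
  have "Y ** (transpose X ** U ** S') = (Y ** transpose X) ** U ** S'"
    by (simp add: matrix_mul_assoc)
  also have "\<dots> = V ** (diag_mat s ** (transpose U ** U) ** S')"
    by (simp add: MT matrix_mul_assoc)
  finally have "Y ** (transpose X ** U ** S') = V" by (simp add: U SS')
  from factor_through_orthonormal_columns(1)[OF this V]
  show "Y = V ** (transpose V ** Y)" .
  have "(transpose U ** X) ** transpose (transpose V ** Y) = transpose U ** (X ** transpose Y) ** V"
    by (simp add: matrix_transpose_mul matrix_mul_assoc)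
  also have "\<dots> = (transpose U ** U) ** diag_mat s ** (transpose V ** V)"
    by (simp only: M matrix_mul_assoc)
  finally show "(transpose U ** X) ** transpose (transpose V ** Y) = diag_mat s"
    by (simp add: U V)
qed

lemma balanced_factorization:
  fixes A B H Q :: "real^'r^'r"
  assumes AB: "A ** transpose B = H ** H" and H_sym: "transpose H = H"
    and "invertible A" and "invertible H" and Q: "Q = matrix_inv H ** A"
  shows "A = H ** Q" and "B = H ** transpose (matrix_inv Q)" and "invertible Q"
proof -
  note A_inv = matrix_inv_cancel[OF \<open>invertible A\<close>] and H_inv = matrix_inv_cancel[OF \<open>invertible H\<close>]
  show "A = H ** Q" by (simp add: Q matrix_mul_assoc H_inv)
  have "Q ** (matrix_inv A ** H) = mat 1"
    by (simp add: Q matrix_mul_assoc) (simp add: matrix_mul_assoc[symmetric] A_inv H_inv)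
  then have Q_inv: "matrix_inv Q = matrix_inv A ** H"
    by (rule matrix_inv_unique)
  then show "invertible Q"
    using \<open>Q ** (matrix_inv A ** H) = mat 1\<close> invertible_right_inverse by blast
  have "transpose B = matrix_inv A ** (A ** transpose B)"
    by (simp add: matrix_mul_assoc A_inv)
  also have "\<dots> = transpose (H ** transpose (matrix_inv Q))"
    by (simp add: AB Q_inv matrix_transpose_mul H_sym matrix_mul_assoc)
  finally show "B = H ** transpose (matrix_inv Q)"
    by (metis transpose_transpose)
qed

lemma gram_orthonormal_factor:
  fixes U :: "real^'r^'n" and H :: "real^'r^'r" and M :: "real^'c^'r"
  assumes "transpose U ** U = mat 1" and "transpose H = H"
  shows "transpose (U ** H ** M) ** (U ** H ** M) = transpose M ** (H ** H) ** M"
proof -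
  have "transpose (U ** H ** M) ** (U ** H ** M) = transpose M ** transpose H ** (transpose U ** U) ** H ** M"
    by (simp only: matrix_transpose_mul) (simp add: matrix_mul_assoc)
  then show ?thesis by (simp add: assms matrix_mul_assoc)
qed

lemma compact_svd_balanced_factorization:
  fixes X Y U V :: "real^'r^'n"
  assumes svd: "is_compact_svd (X ** transpose Y) U s V"
  obtains Q where "invertible Q"
    and "X = U ** diag_mat (\<chi> i. sqrt (s $ i)) ** Q"
    and "Y = V ** diag_mat (\<chi> i. sqrt (s $ i)) ** transpose (matrix_inv Q)"
proof -
  from svd have s_pos: "\<And>i. s $ i > 0" unfolding is_compact_svd_def by auto
  define H where "H = diag_mat (\<chi> i. sqrt (s $ i))"
  define Q where "Q = matrix_inv H ** (transpose U ** X)"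
  have HH: "H ** H = diag_mat s"
    using s_pos by (simp add: H_def diag_mat_sqrt_square less_imp_le)
  have H_sym: "transpose H = H" by (simp add: H_def)
  have "invertible H" unfolding H_def using s_pos by (rule invertible_diag_mat_sqrt)
  note factors = compact_svd_factors[OF svd]
  note balanced = balanced_factorization[OF factors(4)[folded HH] H_sym factors(3) \<open>invertible H\<close> Q_def]
  have "X = U ** H ** Q"
    using factors(1) by (simp only: balanced(1) matrix_mul_assoc)
  moreover have "Y = V ** H ** transpose (matrix_inv Q)"
    using factors(2) by (simp only: balanced(2) matrix_mul_assoc)
  ultimately show ?thesis
    using balanced(3) that unfolding H_def by blast
qed

theorem lemma20:
  fixes X Y :: "real^'r^'n" and U V :: "real^'r^'n" and s :: "real^'r"
  assumes rk: "rank (X ** transpose Y) = CARD('r)"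
    and svd: "is_compact_svd (X ** transpose Y) U s V"
  shows "\<exists>Q :: real^'r^'r. invertible Q \<and>
           X = U ** diag_mat (\<chi> i. sqrt (s $ i)) ** Q \<and>
           Y = V ** diag_mat (\<chi> i. sqrt (s $ i)) ** transpose (matrix_inv Q) \<and>
           (\<forall>UQ sQ VQ. is_svd Q UQ sQ VQ \<longrightarrow>
              frob_norm (diag_mat sQ - diag_mat (\<chi> i. inverse (sQ $ i)))
                \<le> (1 / Min (range (\<lambda>i. s $ i))) *
                   frob_norm (transpose X ** X - transpose Y ** Y)) \<and>
           (transpose X ** X = transpose Y ** Y \<longrightarrow> orthogonal_matrix Q)"
proof -
  from svd have U: "transpose U ** U = mat 1" and V: "transpose V ** V = mat 1"
    and s_pos: "\<And>i. s $ i > 0"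
    unfolding is_compact_svd_def by auto
  obtain Q where Q: "invertible Q"
    and X: "X = U ** diag_mat (\<chi> i. sqrt (s $ i)) ** Q"
    and Y: "Y = V ** diag_mat (\<chi> i. sqrt (s $ i)) ** transpose (matrix_inv Q)"
    using compact_svd_balanced_factorization[OF svd] .
  have HH: "diag_mat (\<chi> i. sqrt (s $ i)) ** diag_mat (\<chi> i. sqrt (s $ i)) = diag_mat s"
    using s_pos by (simp add: diag_mat_sqrt_square less_imp_le)
  have XtX: "transpose X ** X = transpose Q ** diag_mat s ** Q"
    unfolding X using U by (simp add: gram_orthonormal_factor HH)
  have YtY: "transpose Y ** Y = matrix_inv Q ** diag_mat s ** transpose (matrix_inv Q)"
    unfolding Y using V by (simp add: gram_orthonormal_factor HH)
  show ?thesis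
    unfolding XtX YtY
  proof (intro exI[of _ Q] conjI allI impI)
  qed (fact Q X Y | erule svd_singular_value_deviation_le[OF Q s_pos]
        orthogonal_matrix_if_balanced_gram[OF Q s_pos])+
qed

end
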